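(* Let $\mathrm P$ be a probability measure on $\mathbb{R}^d$ having a Lebesgue density, and let $\varphi$ be as in the context. For every $\mathbf u\in\mathbb S_{d-1}$, every sequence of reals $t_n\to\infty$, and every choice $\mathbf y_n\in\partial\varphi(t_n\mathbf u)$, we have $\lim_{n\to\infty}\mathbf y_n=\mathbf u$.
   Context: $\mathbb{B}_d$ is the open unit ball of $\mathbb{R}^d$ and $\mathbb S_{d-1}$ the unit sphere. $\mathrm U_d$ is the spherical uniform distribution on $\mathbb B_d$ (density $u_d(\mathbf x)=\frac{1}{a_d|\mathbf x|^{d-1}}$ on $\mathbb B_d\setminus\{\mathbf 0\}$, $a_d=2\pi^{d/2}/\Gamma(d/2)$). $\psi$ is the convex lsc function on $\mathbb B_d$, normalized by $\psi(\mathbf 0)=0$, whose a.e. gradient pushes $\mathrm U_d$ forward to $\mathrm P$ (McCann), extended by $+\infty$ outside $\bar{\mathbb B}_d$, and $\varphi(\mathbf x)=\sup_{\mathbf u\in\mathbb B_d}(\langle\mathbf u,\mathbf x\rangle-\psi(\mathbf u))$, $\mathbf x\in\mathbb{R}^d$, a convex function with $\nabla\varphi\sharp\mathrm P=\mathrm U_d$. $\partial\varphi$ is the subdifferential. *)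

theory Defs
  imports "HOL-Probability.Probability"
begin

definition sphere_area :: "nat \<Rightarrow> real" where
  "sphere_area d = 2 * pi powr (real d / 2) / Gamma (real d / 2)"

definition spherical_uniform :: "'a::euclidean_space measure" where
  "spherical_uniform = density lborel
     (\<lambda>x. ennreal (indicator (ball 0 1 - {0}) x /
                    (sphere_area DIM('a) * norm x ^ (DIM('a) - 1))))"

definition subdiff :: "('a::real_inner \<Rightarrow> real) \<Rightarrow> 'a \<Rightarrow> 'a set" where
  "subdiff f x = {y. \<forall>z. f z \<ge> f x + y \<bullet> (z - x)}"

definition conj_ball :: "('a::real_inner \<Rightarrow> real) \<Rightarrow> 'a \<Rightarrow> real" where
  "conj_ball \<psi> x = (SUP u\<in>ball 0 1. u \<bullet> x - \<psi> u)"

definition lsc_on :: "'a::topological_space set \<Rightarrow> ('a \<Rightarrow> real) \<Rightarrow> bool" where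
  "lsc_on S f \<longleftrightarrow> (\<forall>x\<in>S. \<forall>e>0. eventually (\<lambda>z. f z > f x - e) (at x within S))"

end

theory Submission
  imports Defs
begin

text \<open>Only the convexity of \<open>\<psi>\<close> matters. It makes \<open>\<psi>\<close> bounded below on the ball, so
  \<open>\<phi> = conj_ball \<psi>\<close> is a finite supremum of affine functions with slopes in the unit ball;
  hence \<open>\<phi>\<close> is 1-Lipschitz and its subgradients lie in the closed unit ball. Testing the
  subgradient inequality at \<open>0\<close> and comparing \<open>\<phi>(t u)\<close> with the affine minorant of slope
  \<open>(1 - \<epsilon>) u\<close> gives \<open>y \<bullet> u \<ge> 1 - \<epsilon> - O(1/t)\<close>, and a unit-ball vector whose inner
  product with the unit vector \<open>u\<close> tends to \<open>1\<close> must tend to \<open>u\<close>.\<close>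

lemma convex_on_ball_bdd_below:
  fixes f :: "'a::euclidean_space \<Rightarrow> real"
  assumes convex: "convex_on (ball a r) f"
  shows "bdd_below (f ` ball a r)"
proof (cases "r > 0")
  case False
  then show ?thesis by (simp add: Elementary_Metric_Spaces.ball_empty)
next
  case True
  have "isCont f a"
    using convex_on_continuous[OF open_ball convex] True
    by (simp add: continuous_on_eq_continuous_at)
  then obtain \<delta> where \<delta>: "\<delta> > 0" "\<And>z. dist z a < \<delta> \<Longrightarrow> f z < f a + 1"
    by (metis continuous_at_eps_delta dist_real_def abs_less_iff zero_less_one add.commute
        diff_less_eq)
  define c where "c = min 1 (\<delta> / r)"
  have c: "c > 0" "c \<le> 1" "c * r \<le> \<delta>"
    using \<delta> True by (auto simp: c_def min_def field_simps)
  have "f a - 1 / c \<le> f v" if v: "v \<in> ball a r" for v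
  proof -
    \<comment> \<open>\<open>a\<close> is a convex combination of \<open>v\<close> and its reflection \<open>w\<close> shrunk towards \<open>a\<close>\<close>
    define w where "w = a - c *\<^sub>R (v - a)"
    have dist_wa: "dist w a < c * r"
      using v c by (simp add: w_def dist_norm norm_minus_commute)
    moreover have "c * r \<le> r" using c True by (simp add: mult_left_le_one_le)
    ultimately have w: "w \<in> ball a r" by (simp add: dist_commute)
    have "f w < f a + 1" using dist_wa c(3) by (intro \<delta>(2)) linarith
    define s where "s = 1 / (1 + c)"
    have s: "0 \<le> s" "s \<le> 1" "1 - s = s * c" using c by (auto simp: s_def field_simps)
    have "(1 - s) *\<^sub>R v + s *\<^sub>R w = a + ((1 - s) - s * c) *\<^sub>R (v - a)"
      unfolding w_def by (simp add: algebra_simps)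
    then have "(1 - s) *\<^sub>R v + s *\<^sub>R w = a" by (simp add: s(3))
    with convex_onD[OF convex s(1,2) v w]
    have "f a \<le> s * c * f v + s * f w" by (simp add: s(3))
    then have "(1 + c) * f a \<le> (1 + c) * (s * c * f v + s * f w)"
      using c by (intro mult_left_mono) auto
    also have "\<dots> = (s * (1 + c)) * (c * f v + f w)" by (simp add: algebra_simps)
    also have "\<dots> = c * f v + f w" using c by (simp add: s_def)
    finally have "(1 + c) * f a \<le> c * f v + f w" .
    with \<open>f w < f a + 1\<close> c show ?thesis by (simp add: field_simps)
  qed
  then show ?thesis by (intro bdd_belowI2)
qed

lemma conj_ball_ge:
  fixes \<psi> :: "'a::real_inner \<Rightarrow> real"
  assumes "bdd_below (\<psi> ` ball 0 1)" and "v \<in> ball 0 1"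
  shows "v \<bullet> x - \<psi> v \<le> conj_ball \<psi> x"
proof -
  obtain L where L: "\<And>w. w \<in> ball 0 1 \<Longrightarrow> L \<le> \<psi> w"
    using assms(1) by (metis bdd_below.E imageI)
  have "w \<bullet> x - \<psi> w \<le> norm x - L" if "w \<in> ball 0 1" for w
  proof -
    have "w \<bullet> x \<le> norm w * norm x" by (rule norm_cauchy_schwarz)
    also have "\<dots> \<le> norm x" using that by (simp add: mult_left_le_one_le)
    finally show ?thesis using L[OF that] by linarith
  qed
  then have "bdd_above ((\<lambda>w. w \<bullet> x - \<psi> w) ` ball 0 1)"
    by (intro bdd_aboveI2)
  then show ?thesis
    unfolding conj_ball_def by (rule cSUP_upper[OF assms(2)])
qed

lemma conj_ball_le:
  fixes \<psi> :: "'a::real_inner \<Rightarrow> real"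
  assumes "\<And>v. v \<in> ball 0 1 \<Longrightarrow> v \<bullet> x - \<psi> v \<le> B"
  shows "conj_ball \<psi> x \<le> B"
  unfolding conj_ball_def by (rule cSUP_least) (auto intro: assms)

lemma conj_ball_le_dist:
  fixes \<psi> :: "'a::real_inner \<Rightarrow> real"
  assumes "bdd_below (\<psi> ` ball 0 1)"
  shows "conj_ball \<psi> z \<le> conj_ball \<psi> x + norm (z - x)"
proof (rule conj_ball_le)
  fix v :: 'a assume v: "v \<in> ball 0 1"
  have "v \<bullet> (z - x) \<le> norm v * norm (z - x)" by (rule norm_cauchy_schwarz)
  also have "\<dots> \<le> norm (z - x)" using v by (simp add: mult_left_le_one_le)
  finally show "v \<bullet> z - \<psi> v \<le> conj_ball \<psi> x + norm (z - x)"
    using conj_ball_ge[OF assms v, of x] by (simp add: inner_diff_right)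
qed

lemma subdiff_norm_le_one:
  fixes f :: "'a::real_inner \<Rightarrow> real"
  assumes lip: "\<And>z. f z \<le> f x + norm (z - x)" and y: "y \<in> subdiff f x"
  shows "norm y \<le> 1"
proof -
  have "f x + y \<bullet> ((x + y) - x) \<le> f (x + y)"
    using y unfolding subdiff_def by blast
  with lip[of "x + y"] have "y \<bullet> y \<le> norm y" by simp
  then have "norm y * norm y \<le> norm y * 1"
    by (simp add: power2_norm_eq_inner[symmetric] power2_eq_square)
  then show ?thesis
    by (metis mult_le_cancel_left_pos mult_zero_left norm_ge_zero order_le_less zero_le_one)
qed

lemma subdiff_conj_ball_inner_ge:
  fixes \<psi> :: "'a::real_inner \<Rightarrow> real"
  assumes "bdd_below (\<psi> ` ball 0 1)" and v: "v \<in> ball 0 1" and s: "s > 0"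
    and y: "y \<in> subdiff (conj_ball \<psi>) (s *\<^sub>R u)"
  shows "v \<bullet> u - (\<psi> v + conj_ball \<psi> 0) / s \<le> y \<bullet> u"
proof -
  have "conj_ball \<psi> (s *\<^sub>R u) + y \<bullet> (0 - s *\<^sub>R u) \<le> conj_ball \<psi> 0"
    using y unfolding subdiff_def by blast
  then have "conj_ball \<psi> (s *\<^sub>R u) - s * (y \<bullet> u) \<le> conj_ball \<psi> 0" by simp
  moreover have "s * (v \<bullet> u) - \<psi> v \<le> conj_ball \<psi> (s *\<^sub>R u)"
    using conj_ball_ge[OF assms(1) v, of "s *\<^sub>R u"] by simp
  ultimately have "s * (v \<bullet> u) - (\<psi> v + conj_ball \<psi> 0) \<le> s * (y \<bullet> u)" by linarith
  with s show ?thesis by (simp add: field_simps)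
qed

lemma tendsto_of_inner_tendsto_one:
  fixes y :: "nat \<Rightarrow> 'a::real_inner"
  assumes u: "norm u = 1" and y: "\<And>n. norm (y n) \<le> 1"
    and lim: "(\<lambda>n. y n \<bullet> u) \<longlonglongrightarrow> 1"
  shows "y \<longlonglongrightarrow> u"
proof -
  have bound: "norm (y n - u) \<le> sqrt (2 * (1 - y n \<bullet> u))" for n
  proof -
    have "(norm (y n))\<^sup>2 \<le> 1" using y[of n] by (simp add: power_le_one)
    then have "(norm (y n - u))\<^sup>2 \<le> 2 * (1 - y n \<bullet> u)"
      using dot_norm_neg[of "y n" u] u by simp
    then show ?thesis by (rule real_le_rsqrt)
  qed
  have "(\<lambda>n. sqrt (2 * (1 - y n \<bullet> u))) \<longlonglongrightarrow> sqrt (2 * (1 - 1))"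
    by (intro tendsto_real_sqrt tendsto_mult_left tendsto_diff tendsto_const lim)
  then have "(\<lambda>n. sqrt (2 * (1 - y n \<bullet> u))) \<longlonglongrightarrow> 0" by simp
  with bound have "(\<lambda>n. y n - u) \<longlonglongrightarrow> 0"
    by (metis (no_types, lifting) Lim_null_comparison always_eventually)
  then show ?thesis by (rule LIM_zero_cancel)
qed

lemma subdiff_conj_ball_tendsto_direction:
  fixes \<psi> :: "'a::real_inner \<Rightarrow> real"
  assumes bdd: "bdd_below (\<psi> ` ball 0 1)" and u: "norm u = 1"
    and t: "filterlim t at_top sequentially"
    and y: "\<And>n. y n \<in> subdiff (conj_ball \<psi>) (t n *\<^sub>R u)"
  shows "y \<longlonglongrightarrow> u"
proof (rule tendsto_of_inner_tendsto_one[OF u])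
  show y_le: "norm (y n) \<le> 1" for n
    using subdiff_norm_le_one[OF conj_ball_le_dist[OF bdd] y] .
  show "(\<lambda>n. y n \<bullet> u) \<longlonglongrightarrow> 1"
  proof (rule tendstoI)
    fix e :: real assume e: "e > 0"
    define \<epsilon> where "\<epsilon> = min (1/2) (e/2)"
    have \<epsilon>: "0 < \<epsilon>" "\<epsilon> \<le> 1/2" "\<epsilon> \<le> e/2" using e by (auto simp: \<epsilon>_def)
    define v where "v = (1 - \<epsilon>) *\<^sub>R u"
    have v: "v \<in> ball 0 1" and vu: "v \<bullet> u = 1 - \<epsilon>"
      using \<epsilon> u by (auto simp: v_def power2_norm_eq_inner[symmetric])
    define C where "C = \<psi> v + conj_ball \<psi> 0"
    have "(\<lambda>n. C / t n) \<longlonglongrightarrow> 0"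
      by (rule tendsto_divide_0[OF tendsto_const filterlim_at_top_imp_at_infinity[OF t]])
    from tendstoD[OF this \<epsilon>(1)]
    have "eventually (\<lambda>n. \<bar>C / t n\<bar> < \<epsilon>) sequentially" by (simp add: dist_real_def)
    moreover have "eventually (\<lambda>n. t n > 0) sequentially"
      using t unfolding filterlim_at_top_dense by blast
    ultimately show "eventually (\<lambda>n. dist (y n \<bullet> u) 1 < e) sequentially"
    proof eventually_elim
      case (elim n)
      have "1 - \<epsilon> - C / t n \<le> y n \<bullet> u"
        using subdiff_conj_ball_inner_ge[OF bdd v _ y, of n] elim vu by (simp add: C_def)
      moreover have "y n \<bullet> u \<le> 1"
        using norm_cauchy_schwarz[of "y n" u] y_le[of n] u by simp
      ultimately show ?case
        using elim \<epsilon> unfolding dist_real_def abs_less_iff by linarith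
    qed
  qed
qed

theorem proposition3p1:
  fixes P :: "'a::euclidean_space measure"
    and \<psi> :: "'a \<Rightarrow> real"
    and G :: "'a \<Rightarrow> 'a"
  assumes P_prob: "prob_space P"
    and P_dens: "\<exists>f\<in>borel_measurable lborel. P = density lborel f"
    and psi_convex: "convex_on (ball 0 1) \<psi>"
    and psi_lsc: "lsc_on (ball 0 1) \<psi>"
    and psi_0: "\<psi> 0 = 0"
    and G_grad: "AE x in spherical_uniform. (\<psi> has_derivative (\<lambda>h. G x \<bullet> h)) (at x)"
    and G_meas: "G \<in> borel_measurable spherical_uniform"
    and push: "distr spherical_uniform borel G = P"
    and u: "u \<in> sphere 0 1"
    and t: "filterlim t at_top sequentially"
    and y: "\<And>n. y n \<in> subdiff (conj_ball \<psi>) (t n *\<^sub>R u)"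
  shows "y \<longlonglongrightarrow> u"
  using subdiff_conj_ball_tendsto_direction[OF convex_on_ball_bdd_below[OF psi_convex] _ t y] u
  by simp

end
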